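(* For every $g\ge 1$, every nice path of $\mathcal{H}_g$ from $v_1$ to $v_2$ is oddly oriented relative to $\mathcal{H}_g^e$.
   Context: The graphs $\mathcal{H}_g$ with hubs $v_1,v_2,v_3,v_4$ and orientations $\mathcal{H}_g^e$ are defined recursively. $\mathcal{H}_1$ is the 4-cycle with edges $\{v_1,v_2\},\{v_1,v_3\},\{v_2,v_4\},\{v_3,v_4\}$, oriented $v_1\to v_2$, $v_1\to v_3$, $v_4\to v_2$, $v_3\to v_4$. For $g>1$, take four disjoint copies $\mathcal{H}_{g-1}^{(i)}$, $i=1,\dots,4$, of $\mathcal{H}_{g-1}$, each oriented as a copy of $\mathcal{H}_{g-1}^e$, with hubs $v_k^{(i)}$; identify $v_1^{(1)},v_1^{(4)}$ as $v_1$, $v_2^{(2)},v_1^{(3)}$ as $v_4$, $v_2^{(1)},v_1^{(2)}$ as $v_3$, and $v_2^{(3)},v_2^{(4)}$ as $v_2$; $\mathcal{H}_g^e$ is the union of the copies' orientations. Paths are elementary (no repeated vertices). A path $P$ of a graph $G$ is nice if the subgraph of $G$ induced by the vertices not on $P$ has a perfect matching. A path from $u$ to $v$ is oddly oriented if, traversing it from $u$ to $v$, an odd number of its edges are oriented in the direction of traversal. *)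

theory Defs
  imports Main
begin

text \<open>Vertices of H_g: either a hub v_k (Hub k, k in 1..4) of the current level, or
  an internal vertex In i v coming from copy i (1..4) of H_(g-1), where v is a vertex
  of H_(g-1) that is not identified with a hub of H_g (i.e. v is not v_1 or v_2 of that copy).\<close>

datatype hvert = Hub nat | In nat hvert

text \<open>Image of hub v_1 and v_2 of copy i in H_g.\<close>
definition hubA :: "nat \<Rightarrow> nat" where
  "hubA i = (if i = 1 then 1 else if i = 2 then 3 else if i = 3 then 4 else 1)"
definition hubB :: "nat \<Rightarrow> nat" where
  "hubB i = (if i = 1 then 3 else if i = 2 then 4 else 2)"

definition emb :: "nat \<Rightarrow> hvert \<Rightarrow> hvert" where
  "emb i v = (if v = Hub 1 then Hub (hubA i) else if v = Hub 2 then Hub (hubB i) else In i v)"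

text \<open>Arcs of the orientation H_g^e (arcs 0 is unused).\<close>
fun arcs :: "nat \<Rightarrow> (hvert \<times> hvert) set" where
  "arcs 0 = {}"
| "arcs (Suc 0) = {(Hub 1, Hub 2), (Hub 1, Hub 3), (Hub 4, Hub 2), (Hub 3, Hub 4)}"
| "arcs (Suc (Suc n)) =
     (\<Union>i\<in>{1..4::nat}. (\<lambda>(a, b). (emb i a, emb i b)) ` arcs (Suc n))"

definition hverts :: "nat \<Rightarrow> hvert set" where
  "hverts g = fst ` arcs g \<union> snd ` arcs g"

definition hedges :: "nat \<Rightarrow> hvert set set" where
  "hedges g = {{a, b} | a b. (a, b) \<in> arcs g}"

definition is_path :: "nat \<Rightarrow> hvert list \<Rightarrow> hvert \<Rightarrow> hvert \<Rightarrow> bool" where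
  "is_path g P u v \<longleftrightarrow> P \<noteq> [] \<and> hd P = u \<and> last P = v \<and> distinct P \<and>
     set P \<subseteq> hverts g \<and> (\<forall>i. Suc i < length P \<longrightarrow> {P ! i, P ! Suc i} \<in> hedges g)"

definition perfect_matching :: "'a set set \<Rightarrow> 'a set \<Rightarrow> 'a set set \<Rightarrow> bool" where
  "perfect_matching E V M \<longleftrightarrow> M \<subseteq> E \<and> (\<forall>e\<in>M. e \<subseteq> V) \<and>
     (\<forall>x\<in>V. \<exists>!e\<in>M. x \<in> e)"

definition nice :: "nat \<Rightarrow> hvert list \<Rightarrow> bool" where
  "nice g P \<longleftrightarrow> (\<exists>M. perfect_matching {e \<in> hedges g. e \<subseteq> hverts g - set P}
                         (hverts g - set P) M)"

definition oddly_oriented :: "nat \<Rightarrow> hvert list \<Rightarrow> bool" where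
  "oddly_oriented g P \<longleftrightarrow>
     odd (card {i. Suc i < length P \<and> (P ! i, P ! Suc i) \<in> arcs g})"

end

(*
  Starting from H_0, a single arc v_1 -> v_2, the graph H_g is the 4-cycle with arcs
  v_1 -> v_3, v_3 -> v_4, v_4 -> v_2, v_1 -> v_2, each replaced by a copy of H_(g-1) entered
  at its v_1 and left at its v_2. Internal vertices of a copy are adjacent only
  inside that copy, so a path from v_1 to v_2 crosses whole copies from hub to hub, and the
  hubs it meets are v_1 v_2 or v_1 v_3 v_4 v_2. Hence it crosses one or three copies, each
  from its v_1 to its v_2, and by induction each crossing has an odd number of forward arcs.
*)
theory Submission
  imports Defs
begin

fun walk :: "('a \<times> 'a) set \<Rightarrow> 'a list \<Rightarrow> bool" where
  "walk A (x # y # zs) \<longleftrightarrow> ((x, y) \<in> A \<or> (y, x) \<in> A) \<and> walk A (y # zs)"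
| "walk A _ \<longleftrightarrow> True"

fun forward_arcs :: "('a \<times> 'a) set \<Rightarrow> 'a list \<Rightarrow> nat" where
  "forward_arcs A (x # y # zs) = (if (x, y) \<in> A then 1 else 0) + forward_arcs A (y # zs)"
| "forward_arcs A _ = 0"

definition epath :: "('a \<times> 'a) set \<Rightarrow> 'a list \<Rightarrow> 'a \<Rightarrow> 'a \<Rightarrow> bool" where
  "epath A P u v \<longleftrightarrow> P \<noteq> [] \<and> hd P = u \<and> last P = v \<and> distinct P \<and> walk A P"

lemma walk_iff_nth:
  "walk A xs \<longleftrightarrow>
     (\<forall>i. Suc i < length xs \<longrightarrow> (xs ! i, xs ! Suc i) \<in> A \<or> (xs ! Suc i, xs ! i) \<in> A)"
proof (induction A xs rule: walk.induct)
  case (1 A x y zs)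
  have all_nat_split: "(\<forall>i::nat. Q i) \<longleftrightarrow> Q 0 \<and> (\<forall>i. Q (Suc i))" for Q
    by (metis not0_implies_Suc)
  show ?case using 1 by (subst all_nat_split) simp
qed auto

lemma forward_arcs_eq_card:
  "forward_arcs A xs = card {i. Suc i < length xs \<and> (xs ! i, xs ! Suc i) \<in> A}"
proof (induction A xs rule: forward_arcs.induct)
  case (1 A x y zs)
  let ?S = "{i. Suc i < length (y # zs) \<and> ((y # zs) ! i, (y # zs) ! Suc i) \<in> A}"
  have "{i. Suc i < length (x # y # zs) \<and> ((x # y # zs) ! i, (x # y # zs) ! Suc i) \<in> A}
      = {i. i = 0 \<and> (x, y) \<in> A} \<union> Suc ` ?S" (is "?L = ?R")
  proof (rule set_eqI)
    show "i \<in> ?L \<longleftrightarrow> i \<in> ?R" for i by (cases i) auto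
  qed
  moreover have "card ({i. i = 0 \<and> (x, y) \<in> A} \<union> Suc ` ?S)
      = (if (x, y) \<in> A then 1 else 0) + card ?S"
    by (subst card_Un_disjoint) (auto simp: card_image)
  ultimately show ?case using 1 by simp
qed auto

lemma walk_append: "walk A (xs @ y # ys) \<longleftrightarrow> walk A (xs @ [y]) \<and> walk A (y # ys)"
  by (induction xs rule: induct_list012) auto

lemma forward_arcs_append:
  "forward_arcs A (xs @ y # ys) = forward_arcs A (xs @ [y]) + forward_arcs A (y # ys)"
  by (induction xs rule: induct_list012) auto

lemma
  assumes "\<And>x y. (f x, f y) \<in> B \<longleftrightarrow> (x, y) \<in> A"
  shows walk_map: "walk B (map f xs) \<longleftrightarrow> walk A xs"
    and forward_arcs_map: "forward_arcs B (map f xs) = forward_arcs A xs"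
  by (induction xs rule: induct_list012) (simp_all add: assms)

lemma epath_single_arc: "u \<noteq> v \<Longrightarrow> epath {(u, v)} P u v \<Longrightarrow> P = [u, v]"
  unfolding epath_def
  by (cases P rule: remdups_adj.cases) (auto simp: last_in_set split: if_splits)

lemma epath_same_ends: "epath A (v # zs) v v \<Longrightarrow> zs = []"
  unfolding epath_def by (metis distinct.simps(2) last_ConsR last_in_set)

definition copies :: "(hvert \<times> hvert) set \<Rightarrow> (hvert \<times> hvert) set" where
  "copies A = (\<Union>i\<in>{1..4}. (\<lambda>(a, b). (emb i a, emb i b)) ` A)"

text \<open>The orientations H_g^e, with hub_arcs 0 the single arc v_1 -> v_2 so that level 1 is
  built from level 0 like every later level.\<close>
fun hub_arcs :: "nat \<Rightarrow> (hvert \<times> hvert) set" where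
  "hub_arcs 0 = {(Hub 1, Hub 2)}"
| "hub_arcs (Suc n) = copies (hub_arcs n)"

lemma arcs_eq_hub_arcs: "arcs (Suc n) = hub_arcs (Suc n)"
proof (induction n)
  case 0
  have "{1..4::nat} = {1, 2, 3, 4}" by auto
  have "hub_arcs 1 = (\<lambda>i. (Hub (hubA i), Hub (hubB i))) ` {1..4}"
    by (auto simp: copies_def emb_def)
  also have "\<dots> = arcs 1"
    using \<open>{1..4} = {1, 2, 3, 4}\<close> by (auto simp: hubA_def hubB_def)
  finally show ?case by simp
next
  case (Suc n)
  have "hub_arcs (Suc (Suc n)) = copies (arcs (Suc n))" by (simp only: hub_arcs.simps Suc.IH)
  then show ?case by (simp add: copies_def)
qed

lemma emb_eq_iff: "i \<in> {1..4} \<Longrightarrow> emb i x = emb i y \<longleftrightarrow> x = y"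
  by (auto simp: emb_def hubA_def hubB_def split: if_splits)

lemma emb_eq_HubD: "emb i x = Hub k \<Longrightarrow> x = Hub 1 \<and> k = hubA i \<or> x = Hub 2 \<and> k = hubB i"
  by (auto simp: emb_def split: if_splits)

lemma emb_eq_InD: "emb j x = In i v \<Longrightarrow> j = i"
  by (auto simp: emb_def split: if_splits)

lemma copies_iff:
  "(u, w) \<in> copies A \<longleftrightarrow> (\<exists>i\<in>{1..4}. \<exists>x y. (x, y) \<in> A \<and> u = emb i x \<and> w = emb i y)"
  unfolding copies_def by auto

lemma irrefl_copies: "irrefl A \<Longrightarrow> irrefl (copies A)"
  by (auto simp: irrefl_def copies_iff emb_eq_iff)

lemma irrefl_hub_arcs: "irrefl (hub_arcs n)"
proof (induction n)
  case 0
  then show ?case by (simp add: irrefl_def)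
next
  case (Suc n)
  then show ?case by (simp add: irrefl_copies)
qed

lemma emb_image_hubs: "emb i ` {Hub 1, Hub 2} = {Hub (hubA i), Hub (hubB i)}"
  by (auto simp: emb_def)

lemma hub_pair_cases: "i \<in> {1..4} \<Longrightarrow> (hubA i, hubB i) \<in> {(1, 3), (3, 4), (4, 2), (1, 2)}"
  by (auto simp: hubA_def hubB_def)

lemma hub_pairs_eq_iff:
  assumes "i \<in> {1..4}" and "j \<in> {1..4}"
  shows "{Hub (hubA i), Hub (hubB i)} = {Hub (hubA j), Hub (hubB j)} \<longleftrightarrow> i = j"
  using assms by (auto simp: hubA_def hubB_def doubleton_eq_iff)

lemma emb_eq_emb_other_copy:
  "emb i x = emb j a \<Longrightarrow> i \<noteq> j \<Longrightarrow> x \<in> {Hub 1, Hub 2} \<and> a \<in> {Hub 1, Hub 2}"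
  by (auto simp: emb_def split: if_splits)

text \<open>Two different copies share at most one hub, so an arc between two images of copy i
  comes from copy i.\<close>
lemma emb_arc_copies_iff:
  assumes i: "i \<in> {1..4}" and A: "irrefl A"
  shows "(emb i x, emb i y) \<in> copies A \<longleftrightarrow> (x, y) \<in> A"
proof
  assume "(emb i x, emb i y) \<in> copies A"
  then obtain j a b where j: "j \<in> {1..4}" and ab: "(a, b) \<in> A" "emb i x = emb j a" "emb i y = emb j b"
    unfolding copies_iff by blast
  have "j = i"
  proof (rule ccontr)
    assume "j \<noteq> i"
    then have "x \<in> {Hub 1, Hub 2}" "y \<in> {Hub 1, Hub 2}" "a \<in> {Hub 1, Hub 2}" "b \<in> {Hub 1, Hub 2}"
      using ab(2,3) emb_eq_emb_other_copy by metis+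
    moreover have "a \<noteq> b" using ab(1) A by (auto simp: irrefl_def)
    moreover have "x \<noteq> y" using ab(2,3) \<open>a \<noteq> b\<close> emb_eq_iff[OF j] by metis
    ultimately have "{x, y} = {Hub 1, Hub 2}" "{a, b} = {Hub 1, Hub 2}" by auto
    moreover have "emb i ` {x, y} = emb j ` {a, b}" using ab(2,3) by simp
    ultimately have "{Hub (hubA i), Hub (hubB i)} = {Hub (hubA j), Hub (hubB j)}"
      by (simp only: emb_image_hubs)
    with \<open>j \<noteq> i\<close> show False using hub_pairs_eq_iff[OF i j] by simp
  qed
  then show "(x, y) \<in> A" using ab emb_eq_iff[OF i] by metis
qed (use i in \<open>unfold copies_iff, blast\<close>)

lemma hub_free_walk_in_copy:
  assumes "walk (copies A) (u # ys @ [w])" and "set ys \<inter> range Hub = {}"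
  shows "\<exists>i\<in>{1..4}. set (u # ys @ [w]) \<subseteq> range (emb i)"
  using assms
proof (induction ys arbitrary: u)
  case Nil
  then show ?case by (auto simp: copies_iff)
next
  case (Cons y ys)
  have "\<exists>i\<in>{1..4}. set (y # ys @ [w]) \<subseteq> range (emb i)"
    using Cons.prems by (intro Cons.IH) auto
  then obtain i where i: "i \<in> {1..4}" and copy: "set (y # ys @ [w]) \<subseteq> range (emb i)"
    by blast
  then obtain x where "y = emb i x" by auto
  moreover have "y \<notin> range Hub" using Cons.prems(2) by auto
  ultimately have y: "y = In i x" by (auto simp: emb_def split: if_splits)
  have "(u, y) \<in> copies A \<or> (y, u) \<in> copies A" using Cons.prems(1) by simp
  then obtain j where "u \<in> range (emb j)" "y \<in> range (emb j)"
    unfolding copies_iff by blast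
  with y have "u \<in> range (emb i)" using emb_eq_InD by (metis imageE)
  with i copy show ?case by auto
qed

lemma epath_lift_copy:
  assumes i: "i \<in> {1..4}" and A: "irrefl A"
    and P: "epath (copies A) (map (emb i) Q) (Hub (hubA i)) (Hub (hubB i))"
  shows "epath A Q (Hub 1) (Hub 2)"
    and "forward_arcs (copies A) (map (emb i) Q) = forward_arcs A Q"
proof -
  have Q: "Q \<noteq> []" using P by (simp add: epath_def)
  have "emb i (Hub 1) = Hub (hubA i)" "emb i (Hub 2) = Hub (hubB i)"
    by (simp_all add: emb_def)
  then have "emb i (hd Q) = emb i (Hub 1)" "emb i (last Q) = emb i (Hub 2)"
    using P Q by (simp_all add: epath_def hd_map last_map)
  then have "hd Q = Hub 1" "last Q = Hub 2" by (simp_all add: emb_eq_iff[OF i])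
  then show "epath A Q (Hub 1) (Hub 2)"
    using P Q by (simp add: epath_def distinct_map walk_map[OF emb_arc_copies_iff[OF i A]])
  show "forward_arcs (copies A) (map (emb i) Q) = forward_arcs A Q"
    by (rule forward_arcs_map[OF emb_arc_copies_iff[OF i A]])
qed

context
  fixes A :: "(hvert \<times> hvert) set"
  assumes irrefl_A: "irrefl A"
    and odd_A: "\<And>Q. epath A Q (Hub 1) (Hub 2) \<Longrightarrow> odd (forward_arcs A Q)"
begin

lemma odd_forward_arcs_crossing:
  assumes i: "i \<in> {1..4}" and S: "epath (copies A) S (Hub (hubA i)) (Hub (hubB i))"
    and copy: "set S \<subseteq> range (emb i)"
  shows "odd (forward_arcs (copies A) S)"
proof -
  obtain Q where "S = map (emb i) Q" using copy ex_map_conv[of S "emb i"] by auto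
  then show ?thesis using epath_lift_copy[OF i irrefl_A] S odd_A by metis
qed

lemma first_crossing:
  assumes P: "epath (copies A) P (Hub a) (Hub 2)" and "a \<noteq> 2"
  obtains i ys b zs where "i \<in> {1..4}" and "P = Hub a # ys @ Hub b # zs"
    and "a = hubA i \<and> b = hubB i \<or> a = hubB i \<and> b = hubA i"
    and "a = hubA i \<Longrightarrow> odd (forward_arcs (copies A) (Hub a # ys @ [Hub b]))"
    and "forward_arcs (copies A) P
      = forward_arcs (copies A) (Hub a # ys @ [Hub b]) + forward_arcs (copies A) (Hub b # zs)"
    and "epath (copies A) (Hub b # zs) (Hub b) (Hub 2)"
proof -
  from P obtain rest where rest: "P = Hub a # rest" unfolding epath_def by (cases P) auto
  with P \<open>a \<noteq> 2\<close> have "Hub 2 \<in> set rest"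
    unfolding epath_def by (metis hvert.inject(1) last_ConsL last_ConsR last_in_set)
  then obtain ys b zs where split: "rest = ys @ Hub b # zs" and ys: "set ys \<inter> range Hub = {}"
    using split_list_first_prop[of rest "\<lambda>x. x \<in> range Hub"] by fastforce
  let ?S = "Hub a # ys @ [Hub b]"
  have P_eq: "P = Hub a # ys @ Hub b # zs" using rest split by simp
  have walk: "walk (copies A) ?S" "walk (copies A) (Hub b # zs)"
    and dist: "distinct P" and last: "last P = Hub 2"
    using P walk_append[of "copies A" "Hub a # ys" "Hub b" zs] unfolding P_eq epath_def by auto
  obtain i where i: "i \<in> {1..4}" and copy: "set ?S \<subseteq> range (emb i)"
    using hub_free_walk_in_copy[OF walk(1) ys] by blast
  have "Hub a \<in> range (emb i)" "Hub b \<in> range (emb i)" "a \<noteq> b"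
    using copy dist unfolding P_eq by auto
  then have ends: "a = hubA i \<and> b = hubB i \<or> a = hubB i \<and> b = hubA i"
    by (metis emb_eq_HubD imageE)
  have "distinct ?S" using dist unfolding P_eq by auto
  then have "odd (forward_arcs (copies A) ?S)" if "a = hubA i"
    using that ends walk(1) odd_forward_arcs_crossing[OF i _ copy] by (auto simp: epath_def)
  moreover have "epath (copies A) (Hub b # zs) (Hub b) (Hub 2)"
    using walk(2) dist last unfolding P_eq epath_def by auto
  ultimately show ?thesis
    using that[OF i P_eq ends] P_eq forward_arcs_append[of "copies A" "Hub a # ys" "Hub b" zs] by simp
qed

lemma odd_forward_arcs_from_4:
  assumes P: "epath (copies A) P (Hub 4) (Hub 2)" and "Hub 3 \<notin> set P"
  shows "odd (forward_arcs (copies A) P)"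
proof -
  obtain i ys b zs where i: "i \<in> {1..4}" and P_eq: "P = Hub 4 # ys @ Hub b # zs"
    and ends: "4 = hubA i \<and> b = hubB i \<or> 4 = hubB i \<and> b = hubA i"
    and odd_crossing: "4 = hubA i \<Longrightarrow> odd (forward_arcs (copies A) (Hub 4 # ys @ [Hub b]))"
    and sum: "forward_arcs (copies A) P
      = forward_arcs (copies A) (Hub 4 # ys @ [Hub b]) + forward_arcs (copies A) (Hub b # zs)"
    and tail: "epath (copies A) (Hub b # zs) (Hub b) (Hub 2)"
    by (rule first_crossing[OF P]) auto
  have "b \<noteq> 3" using \<open>Hub 3 \<notin> set P\<close> P_eq by auto
  then have "4 = hubA i" "b = 2" using hub_pair_cases[OF i] ends by auto
  moreover from this have "zs = []" using tail epath_same_ends by metis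
  ultimately show ?thesis using sum odd_crossing by simp
qed

lemma even_forward_arcs_from_3:
  assumes P: "epath (copies A) P (Hub 3) (Hub 2)" and "Hub 1 \<notin> set P"
  shows "even (forward_arcs (copies A) P)"
proof -
  obtain i ys b zs where i: "i \<in> {1..4}" and P_eq: "P = Hub 3 # ys @ Hub b # zs"
    and ends: "3 = hubA i \<and> b = hubB i \<or> 3 = hubB i \<and> b = hubA i"
    and odd_crossing: "3 = hubA i \<Longrightarrow> odd (forward_arcs (copies A) (Hub 3 # ys @ [Hub b]))"
    and sum: "forward_arcs (copies A) P
      = forward_arcs (copies A) (Hub 3 # ys @ [Hub b]) + forward_arcs (copies A) (Hub b # zs)"
    and tail: "epath (copies A) (Hub b # zs) (Hub b) (Hub 2)"
    by (rule first_crossing[OF P]) auto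
  have "b \<noteq> 1" using \<open>Hub 1 \<notin> set P\<close> P_eq by auto
  then have "3 = hubA i" "b = 4" using hub_pair_cases[OF i] ends by auto
  moreover have "Hub 3 \<notin> set (Hub b # zs)" using P unfolding P_eq epath_def by auto
  ultimately have "odd (forward_arcs (copies A) (Hub b # zs))"
    using odd_forward_arcs_from_4 tail by simp
  then show ?thesis using sum odd_crossing \<open>3 = hubA i\<close> by simp
qed

lemma odd_forward_arcs_copies:
  assumes P: "epath (copies A) P (Hub 1) (Hub 2)"
  shows "odd (forward_arcs (copies A) P)"
proof -
  obtain i ys b zs where i: "i \<in> {1..4}" and P_eq: "P = Hub 1 # ys @ Hub b # zs"
    and ends: "1 = hubA i \<and> b = hubB i \<or> 1 = hubB i \<and> b = hubA i"
    and odd_crossing: "1 = hubA i \<Longrightarrow> odd (forward_arcs (copies A) (Hub 1 # ys @ [Hub b]))"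
    and sum: "forward_arcs (copies A) P
      = forward_arcs (copies A) (Hub 1 # ys @ [Hub b]) + forward_arcs (copies A) (Hub b # zs)"
    and tail: "epath (copies A) (Hub b # zs) (Hub b) (Hub 2)"
    by (rule first_crossing[OF P]) auto
  have "1 = hubA i" "b = 2 \<or> b = 3"
    using hub_pair_cases[OF i] ends by auto
  then consider "b = 2" | "b = 3" by blast
  then show ?thesis
  proof cases
    case 1
    then have "zs = []" using tail epath_same_ends by metis
    then show ?thesis using sum odd_crossing \<open>1 = hubA i\<close> \<open>b = 2\<close> by simp
  next
    case 2
    have "Hub 1 \<notin> set (Hub b # zs)" using P unfolding P_eq epath_def by auto
    then have "even (forward_arcs (copies A) (Hub b # zs))"
      using even_forward_arcs_from_3 tail \<open>b = 3\<close> by simp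
    then show ?thesis using sum odd_crossing \<open>1 = hubA i\<close> by simp
  qed
qed

end

lemma odd_forward_arcs_hub_arcs:
  "epath (hub_arcs n) P (Hub 1) (Hub 2) \<Longrightarrow> odd (forward_arcs (hub_arcs n) P)"
proof (induction n arbitrary: P)
  case 0
  then have "P = [Hub 1, Hub 2]" by (intro epath_single_arc) simp_all
  then show ?case by simp
next
  case (Suc n)
  then show ?case using odd_forward_arcs_copies[OF irrefl_hub_arcs] by simp
qed

lemma hedges_doubleton_iff: "{u, w} \<in> hedges g \<longleftrightarrow> (u, w) \<in> arcs g \<or> (w, u) \<in> arcs g"
  unfolding hedges_def by (auto simp: doubleton_eq_iff)

theorem lemma3:
  fixes g :: nat and P :: "hvert list"
  assumes "g \<ge> 1"
    and "is_path g P (Hub 1) (Hub 2)"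
    and "nice g P"
  shows "oddly_oriented g P"
proof -
  obtain n where g: "g = Suc n" using assms(1) by (cases g) auto
  have "epath (arcs g) P (Hub 1) (Hub 2)"
    using assms(2) unfolding is_path_def epath_def walk_iff_nth hedges_doubleton_iff by blast
  then have "odd (forward_arcs (arcs g) P)"
    unfolding g arcs_eq_hub_arcs by (rule odd_forward_arcs_hub_arcs)
  then show ?thesis unfolding oddly_oriented_def forward_arcs_eq_card .
qed

end
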